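(* Let $r$ be the maximal multiplicity of an eigenvalue in the spectrum $\Lambda$. Then for every unit vector $|\psi\rangle\in\mathbb{C}^{d_A}\otimes\mathbb{C}^{d_B}$, $\mathcal{E}_\Lambda(\psi)=0$ if and only if the Schmidt rank of $|\psi\rangle$ (the rank of $\mathrm{Tr}_B|\psi\rangle\langle\psi|$) is at most $r$. In particular, $\mathcal{E}_\Lambda$ vanishes exactly on product states if and only if $\Lambda$ consists of $d$ distinct values.
   Context: Let $d=d_A\le d_B$. A spectrum is a multiset $\Lambda=\{\lambda_1,\dots,\lambda_d\}$ of unimodular complex numbers. Let $\mathcal{W}_\Lambda$ be the set of unitary matrices on $\mathbb{C}^{d_A}$ whose eigenvalues, counted with multiplicity, are exactly $\Lambda$. Define $F^\Lambda_\psi=\max_{W\in\mathcal{W}_\Lambda}|\langle\psi|(W\otimes \mathbb{1}_B)|\psi\rangle|^2$ and $\mathcal{E}_\Lambda(\psi)=1-F^\Lambda_\psi$. *)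

theory Defs
  imports "Jordan_Normal_Form.Schur_Decomposition" "Jordan_Normal_Form.DL_Rank"
begin

text \<open>Bipartite vectors in C^dA (x) C^dB are complex vectors of dimension dA*dB,
  with the basis vector |i>|j> (i < dA, j < dB) at index i*dB + j.\<close>

definition unitary_mat :: "nat \<Rightarrow> complex mat \<Rightarrow> bool" where
  "unitary_mat d W \<longleftrightarrow> W \<in> carrier_mat d d \<and> W * mat_adjoint W = 1\<^sub>m d \<and> mat_adjoint W * W = 1\<^sub>m d"

text \<open>Unitaries on C^d whose eigenvalues counted with multiplicity are exactly Lam
  (i.e. whose characteristic polynomial is prod over Lam of (x - lambda)).\<close>
definition W_spec :: "nat \<Rightarrow> complex multiset \<Rightarrow> complex mat set" where
  "W_spec d Lam = {W. unitary_mat d W \<and>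
      char_poly W = prod_mset (image_mset (\<lambda>a. [:-a, 1:]) Lam)}"

definition tensor_id :: "nat \<Rightarrow> nat \<Rightarrow> complex mat \<Rightarrow> complex mat" where
  "tensor_id dA dB W = mat (dA * dB) (dA * dB)
     (\<lambda>(k, l). if k mod dB = l mod dB then W $$ (k div dB, l div dB) else 0)"

definition expval :: "complex vec \<Rightarrow> complex mat \<Rightarrow> complex" where
  "expval psi X = (X *\<^sub>v psi) \<bullet>c psi"

definition F_Lam :: "nat \<Rightarrow> nat \<Rightarrow> complex multiset \<Rightarrow> complex vec \<Rightarrow> real" where
  "F_Lam dA dB Lam psi = Sup {(cmod (expval psi (tensor_id dA dB W)))\<^sup>2 | W. W \<in> W_spec dA Lam}"

definition E_Lam :: "nat \<Rightarrow> nat \<Rightarrow> complex multiset \<Rightarrow> complex vec \<Rightarrow> real" where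
  "E_Lam dA dB Lam psi = 1 - F_Lam dA dB Lam psi"

definition partial_trace_B :: "nat \<Rightarrow> nat \<Rightarrow> complex vec \<Rightarrow> complex mat" where
  "partial_trace_B dA dB psi = mat dA dA
     (\<lambda>(i, i'). \<Sum>j<dB. psi $ (i * dB + j) * cnj (psi $ (i' * dB + j)))"

definition schmidt_rank :: "nat \<Rightarrow> nat \<Rightarrow> complex vec \<Rightarrow> nat" where
  "schmidt_rank dA dB psi = vec_space.rank dA (partial_trace_B dA dB psi)"

definition unit_state :: "nat \<Rightarrow> nat \<Rightarrow> complex vec \<Rightarrow> bool" where
  "unit_state dA dB psi \<longleftrightarrow> psi \<in> carrier_vec (dA * dB) \<and> psi \<bullet>c psi = 1"

definition max_mult :: "complex multiset \<Rightarrow> nat" where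
  "max_mult Lam = Max (count Lam ` set_mset Lam)"

end

theory Submission
  imports Defs
begin

text \<open>Write the reduced state as rho = Q diag(d) Q^*, so that the Schmidt rank is the number z
  of nonzero eigenvalues d_l, and note that the expectation of W (x) 1 is tr(W rho). A unitary W
  with spectrum Lam is unitarily diagonalisable, W = P diag(lambda) P^*, hence
  tr(W rho) = sum_k lambda_k s_k with s_k = sum_l d_l |V_kl|^2 for the unitary V = P^* Q; the s_k
  form a probability vector. If z <= r, placing the most frequent eigenvalue mu on the support of
  rho gives tr(W rho) = mu, of modulus 1. If z > r, each level set of lambda has at most r
  elements and so, V being unitary, carries s-mass at most 1 - delta, where delta is the least
  nonzero d_l; as distinct points of a finite subset of the unit circle are uniformly separated,
  |tr(W rho)|^2 <= 1 - gamma delta for some gamma > 0 independent of W, and the supremum defining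
  F stays below 1.\<close>

section \<open>Adjoints and unitary matrices\<close>

lemma mat_adjoint_index [simp]:
  "i < dim_col A \<Longrightarrow> j < dim_row A \<Longrightarrow> mat_adjoint (A :: complex mat) $$ (i, j) = cnj (A $$ (j, i))"
  and mat_adjoint_dim [simp]:
  "dim_row (mat_adjoint A) = dim_col A" "dim_col (mat_adjoint A) = dim_row A"
  by (auto simp: mat_adjoint_def mat_of_rows_def)

lemma mat_adjoint_carrier [simp]:
  "A \<in> carrier_mat n m \<Longrightarrow> mat_adjoint (A :: complex mat) \<in> carrier_mat m n"
  by auto

lemma mat_adjoint_adjoint [simp]: "mat_adjoint (mat_adjoint (A :: complex mat)) = A"
  by (rule eq_matI) auto

lemma mat_adjoint_one [simp]: "mat_adjoint (1\<^sub>m n :: complex mat) = 1\<^sub>m n"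
  and mat_adjoint_zero [simp]: "mat_adjoint (0\<^sub>m n m :: complex mat) = 0\<^sub>m m n"
  by (auto intro!: eq_matI)

lemma mat_adjoint_mult:
  assumes "A \<in> carrier_mat n k" "B \<in> carrier_mat k m"
  shows "mat_adjoint (A * B :: complex mat) = mat_adjoint B * mat_adjoint A"
  using assms by (intro eq_matI) (auto simp: scalar_prod_def cnj_sum intro!: sum.cong)

lemma mat_adjoint_four_block:
  assumes "A \<in> carrier_mat n1 m1" "B \<in> carrier_mat n1 m2" "C \<in> carrier_mat n2 m1"
    "D \<in> carrier_mat n2 m2"
  shows "mat_adjoint (four_block_mat A B C D :: complex mat)
    = four_block_mat (mat_adjoint A) (mat_adjoint C) (mat_adjoint B) (mat_adjoint D)"
  using assms by (intro eq_matI) (auto simp: four_block_mat_def)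

lemma mult_mat_adjoint_diag:
  "i < dim_row A \<Longrightarrow>
    (A * mat_adjoint A) $$ (i, i) = of_real (\<Sum>j<dim_col A. (cmod (A $$ (i, j)))\<^sup>2)"
  "j < dim_col A \<Longrightarrow>
    (mat_adjoint A * A) $$ (j, j) = of_real (\<Sum>i<dim_row A. (cmod (A $$ (i, j)))\<^sup>2)"
  by (auto simp: scalar_prod_def lessThan_atLeast0 mult.commute
      simp flip: complex_norm_square intro!: sum.cong)

lemma unitary_matI:
  assumes "A \<in> carrier_mat n n" "mat_adjoint A * A = 1\<^sub>m n"
  shows "unitary_mat n A"
  using assms mat_mult_left_right_inverse[of "mat_adjoint A" n A] unfolding unitary_mat_def by auto

lemma unitary_mat_carrier: "unitary_mat n A \<Longrightarrow> A \<in> carrier_mat n n"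
  by (simp add: unitary_mat_def)

lemma unitary_mat_adjoint: "unitary_mat n A \<Longrightarrow> unitary_mat n (mat_adjoint A)"
  unfolding unitary_mat_def by auto

lemma unitary_mat_mult:
  assumes A: "unitary_mat n A" and B: "unitary_mat n B"
  shows "unitary_mat n (A * B)"
proof (rule unitary_matI)
  have [simp]: "A \<in> carrier_mat n n" "B \<in> carrier_mat n n"
    using A B by (auto simp: unitary_mat_def)
  have "mat_adjoint (A * B) * (A * B) = mat_adjoint B * (mat_adjoint A * (A * B))"
    by (simp add: mat_adjoint_mult[of A n n B n] mult_carrier_mat[of _ n n _ n]
        assoc_mult_mat[of _ n n _ n _ n])
  also have "mat_adjoint A * (A * B) = (mat_adjoint A * A) * B"
    by (simp add: assoc_mult_mat[of _ n n _ n _ n])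
  also have "mat_adjoint B * (\<dots>) = 1\<^sub>m n"
    using A B left_mult_one_mat[of B n n] by (simp add: unitary_mat_def)
  finally show "mat_adjoint (A * B) * (A * B) = 1\<^sub>m n" .
qed (use A B in \<open>auto simp: unitary_mat_def\<close>)

lemma unitary_mat_row_norm:
  "unitary_mat n V \<Longrightarrow> k < n \<Longrightarrow> (\<Sum>l<n. (cmod (V $$ (k, l)))\<^sup>2) = 1"
  and unitary_mat_col_norm:
  "unitary_mat n V \<Longrightarrow> l < n \<Longrightarrow> (\<Sum>k<n. (cmod (V $$ (k, l)))\<^sup>2) = 1"
  using mult_mat_adjoint_diag[of k V] mult_mat_adjoint_diag[of l V]
  by (auto simp: unitary_mat_def simp del: of_real_sum of_real_power)

lemma unitary_conjugate_cancel:
  assumes Q: "unitary_mat n Q" and T: "T \<in> carrier_mat n n"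
  shows "mat_adjoint Q * (Q * T * mat_adjoint Q) * Q = T"
proof -
  have [simp]: "Q \<in> carrier_mat n n" using Q by (simp add: unitary_mat_def)
  have "mat_adjoint Q * (Q * T * mat_adjoint Q) * Q
      = (mat_adjoint Q * Q) * T * (mat_adjoint Q * Q)"
    using T by (simp add: mult_carrier_mat[of _ n n _ n] assoc_mult_mat[of _ n n _ n _ n])
  then show ?thesis using Q T by (simp add: unitary_mat_def)
qed

section \<open>Unitary triangularisation and the spectral theorem\<close>

lemma unitary_completion:
  fixes v :: "complex vec"
  assumes v: "v \<in> carrier_vec n" and v0: "v \<noteq> 0\<^sub>v n"
  obtains W c where "unitary_mat n W" and "col W 0 = c \<cdot>\<^sub>v v"
proof -
  interpret cof_vec_space n "TYPE(complex)" .
  define b where "b = basis_completion v"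
  define ws where "ws = gram_schmidt n b"
  from basis_completion[OF v v0, folded b_def]
  have b: "set b \<subseteq> carrier_vec n" "distinct b" "\<not> lin_dep (set b)" "hd b = v" "length b = n"
    by auto
  have n: "0 < n" using v v0 by (cases n) auto
  with b(4,5) obtain vs where bv: "b = v # vs" by (cases b) auto
  from gram_schmidt_result[OF b(1-3) refl, folded ws_def] b(5)
  have ws: "set ws \<subseteq> carrier_vec n" "corthogonal ws" "length ws = n" by auto
  have "hd ws = v" unfolding ws_def bv by (rule gram_schmidt_hd[OF v])
  then have ws0: "ws ! 0 = v" using ws(3) n by (cases ws) auto
  have wsi: "ws ! i \<in> carrier_vec n" if "i < n" for i using ws that by auto
  define c where "c i = complex_of_real (1 / sqrt (Re (ws ! i \<bullet>c ws ! i)))" for i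
  have normalized: "cnj (c i) * c i * (ws ! i \<bullet>c ws ! i) = 1" if i: "i < n" for i
  proof -
    have "ws ! i \<bullet>c ws ! i > 0"
      using corthogonalD[OF ws(2), of i i] ws(3) i wsi[OF i] by auto
    then obtain r where r: "ws ! i \<bullet>c ws ! i = of_real r" "r > 0"
      by (auto simp: less_complex_def complex_eq_iff intro!: exI[of _ "Re (ws ! i \<bullet>c ws ! i)"])
    then have "cnj (c i) * c i * (ws ! i \<bullet>c ws ! i) = of_real ((1 / sqrt r)\<^sup>2 * r)"
      by (simp add: c_def r power2_eq_square flip: of_real_mult)
    also have "(1 / sqrt r)\<^sup>2 * r = 1" using r(2) by (simp add: power_divide)
    finally show ?thesis by simp
  qed
  define W where "W = mat n n (\<lambda>(k, i). c i * (ws ! i $ k))"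
  have "mat_adjoint W * W = 1\<^sub>m n"
  proof (rule eq_matI)
    fix i j assume "i < dim_row (1\<^sub>m n :: complex mat)" "j < dim_col (1\<^sub>m n :: complex mat)"
    then have i: "i < n" and j: "j < n" by auto
    have "(mat_adjoint W * W) $$ (i, j) = cnj (c i) * c j * (ws ! j \<bullet>c ws ! i)"
      using i j wsi[OF i] wsi[OF j]
      by (auto simp: W_def scalar_prod_def lessThan_atLeast0 sum_distrib_left intro!: sum.cong)
    also have "\<dots> = 1\<^sub>m n $$ (i, j)"
      using normalized[OF i] corthogonalD[OF ws(2), of j i] ws(3) i j by auto
    finally show "(mat_adjoint W * W) $$ (i, j) = 1\<^sub>m n $$ (i, j)" .
  qed (auto simp: W_def)
  then have "unitary_mat n W" by (intro unitary_matI) (auto simp: W_def)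
  moreover have "col W 0 = c 0 \<cdot>\<^sub>v v"
    using v n by (intro eq_vecI) (auto simp: W_def ws0)
  ultimately show thesis by (rule that)
qed

lemma unitary_deflation:
  fixes A :: "complex mat"
  assumes A: "A \<in> carrier_mat n n" and e: "eigenvalue A e"
  obtains W B C where "unitary_mat n W" and "B \<in> carrier_mat 1 (n - 1)"
    and "C \<in> carrier_mat (n - 1) (n - 1)"
    and "mat_adjoint W * A * W = four_block_mat (mat 1 1 (\<lambda>_. e)) B (0\<^sub>m (n - 1) 1) C"
proof -
  obtain v where v: "v \<in> carrier_vec n" "v \<noteq> 0\<^sub>v n" "A *\<^sub>v v = e \<cdot>\<^sub>v v"
    using find_eigenvector[OF A e] A unfolding eigenvector_def by auto
  then have n: "0 < n" by (cases n) auto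
  obtain W c where W: "unitary_mat n W" and W0: "col W 0 = c \<cdot>\<^sub>v v"
    using unitary_completion[OF v(1,2)] .
  have Wc: "W \<in> carrier_mat n n" using W by (rule unitary_mat_carrier)
  define A' where "A' = mat_adjoint W * A * W"
  have A': "A' \<in> carrier_mat n n" using A Wc by (simp add: A'_def mult_carrier_mat[of _ n n _ n])
  have first_col: "A' $$ (i, 0) = (if i = 0 then e else 0)" if i: "i < n" for i
  proof -
    have eigen: "A *\<^sub>v col W 0 = e \<cdot>\<^sub>v col W 0"
      using A v by (simp add: W0 mult_mat_vec smult_smult_assoc mult.commute)
    have "col A' 0 = mat_adjoint W *\<^sub>v (A *\<^sub>v col W 0)"
      using A Wc n by (simp add: A'_def assoc_mult_mat[of _ n n _ n _ n] col_mult2[of _ n n _ n]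
          mult_carrier_mat[of _ n n _ n] del: col_mult)
    also have "\<dots> = e \<cdot>\<^sub>v col (mat_adjoint W * W) 0"
      using Wc n eigen
      by (simp add: mult_mat_vec[of _ n n _ e] col_mult2[of _ n n _ n] del: col_mult)
    finally have "col A' 0 $ i = (e \<cdot>\<^sub>v col (mat_adjoint W * W) 0) $ i" by simp
    then show ?thesis using W A' i n by (simp add: unitary_mat_def)
  qed
  obtain A1 B A0 C where split: "split_block A' 1 1 = (A1, B, A0, C)"
    by (cases "split_block A' 1 1")
  from A' n have "dim_row A' = 1 + (n - 1)" "dim_col A' = 1 + (n - 1)" by auto
  from split_block[OF split this] have "B \<in> carrier_mat 1 (n - 1)"
    "C \<in> carrier_mat (n - 1) (n - 1)" "A' = four_block_mat A1 B A0 C" by auto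
  moreover have "A1 = mat 1 1 (\<lambda>_. e)"
    using split first_col[of 0] A' n by (auto simp: split_block_def Let_def)
  moreover have "A0 = 0\<^sub>m (n - 1) 1"
    using split first_col A' by (auto simp: split_block_def Let_def)
  ultimately show thesis using that W unfolding A'_def by auto
qed

lemma similar_mat_wit_unitary_iff:
  fixes A :: "complex mat"
  assumes "A \<in> carrier_mat n n"
  shows "similar_mat_wit A T P (mat_adjoint P)
    \<longleftrightarrow> unitary_mat n P \<and> T \<in> carrier_mat n n \<and> A = P * T * mat_adjoint P"
proof
  assume "similar_mat_wit A T P (mat_adjoint P)"
  from similar_mat_witD2[OF assms this]
  show "unitary_mat n P \<and> T \<in> carrier_mat n n \<and> A = P * T * mat_adjoint P"
    unfolding unitary_mat_def by blast
next
  assume "unitary_mat n P \<and> T \<in> carrier_mat n n \<and> A = P * T * mat_adjoint P"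
  then show "similar_mat_wit A T P (mat_adjoint P)"
    using assms by (intro similar_mat_witI[of _ _ n]) (auto simp: unitary_mat_def)
qed

lemma similar_mat_wit_unitary_four_block:
  fixes E B P T :: "complex mat"
  assumes E: "E \<in> carrier_mat 1 1" and B: "B \<in> carrier_mat 1 m" and P: "unitary_mat m P"
    and T: "T \<in> carrier_mat m m"
  shows "similar_mat_wit (four_block_mat E B (0\<^sub>m m 1) (P * T * mat_adjoint P))
    (four_block_mat E (B * P) (0\<^sub>m m 1) T)
    (four_block_mat (1\<^sub>m 1) (0\<^sub>m 1 m) (0\<^sub>m m 1) P)
    (mat_adjoint (four_block_mat (1\<^sub>m 1) (0\<^sub>m 1 m) (0\<^sub>m m 1) P))"
proof -
  have Pc: "P \<in> carrier_mat m m" using P by (rule unitary_mat_carrier)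
  have "B = 1\<^sub>m 1 * (B * P) * mat_adjoint P"
    using B Pc P by (simp add: assoc_mult_mat[of _ 1 m _ m _ m] unitary_mat_def)
  moreover have "0\<^sub>m m 1 = P * 0\<^sub>m m 1 * 1\<^sub>m 1" using Pc by simp
  moreover have "similar_mat_wit (P * T * mat_adjoint P) T P (mat_adjoint P)"
    using similar_mat_wit_unitary_iff[of _ m] P T Pc by (simp add: mult_carrier_mat[of _ m m _ m])
  ultimately have "similar_mat_wit (four_block_mat E B (0\<^sub>m m 1) (P * T * mat_adjoint P))
      (four_block_mat E (B * P) (0\<^sub>m m 1) T) (four_block_mat (1\<^sub>m 1) (0\<^sub>m 1 m) (0\<^sub>m m 1) P)
      (four_block_mat (1\<^sub>m 1) (0\<^sub>m 1 m) (0\<^sub>m m 1) (mat_adjoint P))"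
    using E B Pc T
    by (intro similar_mat_wit_four_block[OF similar_mat_wit_refl[OF E]])
      (auto simp: mult_carrier_mat[of _ m m _ m])
  then show ?thesis using Pc by (simp add: mat_adjoint_four_block[of _ 1 1 _ m _ m])
qed

lemma unitary_schur:
  fixes A :: "complex mat"
  assumes "A \<in> carrier_mat n n" and "char_poly A = (\<Prod>e\<leftarrow>es. [:-e, 1:])"
  shows "\<exists>P T. unitary_mat n P \<and> T \<in> carrier_mat n n \<and> upper_triangular T
    \<and> diag_mat T = es \<and> A = P * T * mat_adjoint P"
  using assms
proof (induction es arbitrary: n A)
  case Nil
  then have "n = 0" using degree_monic_char_poly[of A n] by auto
  with Nil show ?case
    by (intro exI[of _ "1\<^sub>m n"] exI[of _ A])
      (auto simp: unitary_mat_def diag_mat_def upper_triangular_def)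
next
  case (Cons e es n A)
  have A: "A \<in> carrier_mat n n" by fact
  have "eigenvalue A e" using Cons(3) by (simp add: eigenvalue_root_char_poly[OF A])
  then obtain W B C where W: "unitary_mat n W" and B: "B \<in> carrier_mat 1 (n - 1)"
    and C: "C \<in> carrier_mat (n - 1) (n - 1)"
    and deflated: "mat_adjoint W * A * W = four_block_mat (mat 1 1 (\<lambda>_. e)) B (0\<^sub>m (n - 1) 1) C"
    by (rule unitary_deflation[OF A])
  have "dim_row (mat_adjoint W * A * W) = n" using W by (auto simp: unitary_mat_def)
  then have n: "0 < n" unfolding deflated by simp
  let ?E = "mat 1 1 (\<lambda>_. e) :: complex mat"
  let ?A' = "four_block_mat ?E B (0\<^sub>m (n - 1) 1) C"
  have "?A' \<in> carrier_mat n n"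
    unfolding deflated[symmetric] using A W by (auto simp: unitary_mat_def)
  then have sim_A: "similar_mat_wit A ?A' W (mat_adjoint W)"
    unfolding similar_mat_wit_unitary_iff[OF A]
    using unitary_conjugate_cancel[OF unitary_mat_adjoint[OF W] A] W by (simp add: deflated)
  have "[:-e, 1:] * (\<Prod>e\<leftarrow>es. [:-e, 1:]) = char_poly ?A'"
    using Cons(3) char_poly_similar[of A ?A'] sim_A by (auto simp: similar_mat_def)
  also have "\<dots> = [:-e, 1:] * char_poly C"
    using char_poly_four_block_zeros_col[OF _ B C, of ?E]
    by (simp add: char_poly_defs det_def sign_def)
  finally have "char_poly C = (\<Prod>e\<leftarrow>es. [:-e, 1:])"
    by (metis mult_cancel_left pCons_eq_0_iff zero_neq_one)
  with Cons.IH[OF C] obtain P3 T3 where P3: "unitary_mat (n - 1) P3"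
    and T3: "T3 \<in> carrier_mat (n - 1) (n - 1)" "upper_triangular T3" "diag_mat T3 = es"
    and C_eq: "C = P3 * T3 * mat_adjoint P3" by blast
  define T where "T = four_block_mat ?E (B * P3) (0\<^sub>m (n - 1) 1) T3"
  define U where "U = four_block_mat (1\<^sub>m 1) (0\<^sub>m 1 (n - 1)) (0\<^sub>m (n - 1) 1) P3"
  have "similar_mat_wit ?A' T U (mat_adjoint U)"
    unfolding T_def U_def C_eq by (rule similar_mat_wit_unitary_four_block[OF _ B P3 T3(1)]) simp
  with sim_A have "similar_mat_wit A T (W * U) (mat_adjoint U * mat_adjoint W)"
    by (rule similar_mat_wit_trans)
  also have "mat_adjoint U * mat_adjoint W = mat_adjoint (W * U)"
  proof -
    have "U \<in> carrier_mat (1 + (n - 1)) (1 + (n - 1))"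
      unfolding U_def by (rule four_block_carrier_mat[OF _ unitary_mat_carrier[OF P3]]) simp
    then show ?thesis using n by (simp add: mat_adjoint_mult[OF unitary_mat_carrier[OF W]])
  qed
  finally have "unitary_mat n (W * U) \<and> T \<in> carrier_mat n n \<and> A = W * U * T * mat_adjoint (W * U)"
    using similar_mat_wit_unitary_iff[OF A] by blast
  moreover have "upper_triangular T"
    unfolding T_def by (rule upper_triangular_four_block[of _ 1 _ "n - 1"]) (use T3 in auto)
  moreover have "diag_mat T = e # es"
    unfolding T_def using diag_four_block_mat[of ?E 1 T3 "n - 1"] T3 by (simp add: diag_mat_def)
  ultimately show ?case by (intro exI[of _ "W * U"] exI[of _ T]) simp
qed

lemma normal_upper_triangular_diagonal:
  fixes T :: "complex mat"
  assumes T: "T \<in> carrier_mat n n" and ut: "upper_triangular T"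
    and normal: "T * mat_adjoint T = mat_adjoint T * T"
  shows "diagonal_mat T"
proof -
  have "\<forall>j<n. j \<noteq> i \<longrightarrow> T $$ (i, j) = 0" if "i < n" for i
    using that
  proof (induction i rule: less_induct)
    case (less i)
    have col: "T $$ (k, i) = 0" if "k < n" "k \<noteq> i" for k
      using less.IH[of k] ut T that less.prems by (cases "k < i") (auto simp: upper_triangular_def)
    have "(\<Sum>j<n. (cmod (T $$ (i, j)))\<^sup>2) = (\<Sum>k<n. (cmod (T $$ (k, i)))\<^sup>2)"
      using mult_mat_adjoint_diag[of i T] normal T less.prems
      by (auto simp del: of_real_sum of_real_power)
    also have "\<dots> = (cmod (T $$ (i, i)))\<^sup>2"
      using col less.prems by (subst sum.remove[of _ i]) auto
    finally have "(\<Sum>j\<in>{..<n} - {i}. (cmod (T $$ (i, j)))\<^sup>2) = 0"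
      using less.prems by (subst (asm) sum.remove[of _ i]) auto
    then show ?case by (subst (asm) sum_nonneg_eq_0_iff) auto
  qed
  then show ?thesis using T by (auto simp: diagonal_mat_def)
qed

lemma unitary_conjugate_mult:
  fixes X Y :: "complex mat"
  assumes P: "unitary_mat n P" and X: "X \<in> carrier_mat n n" and Y: "Y \<in> carrier_mat n n"
  shows "(mat_adjoint P * X * P) * (mat_adjoint P * Y * P) = mat_adjoint P * (X * Y) * P"
proof -
  have Pc: "P \<in> carrier_mat n n" using P by (rule unitary_mat_carrier)
  have cancel: "P * (mat_adjoint P * Z) = Z" if "Z \<in> carrier_mat n n" for Z
    using that Pc P
    by (simp add: assoc_mult_mat[symmetric, of P n n "mat_adjoint P" n Z n] unitary_mat_def)
  show ?thesis
    using Pc X Y by (simp add: mult_carrier_mat[of _ n n _ n] assoc_mult_mat[of _ n n _ n _ n] cancel)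
qed

lemma mat_adjoint_unitary_conjugate:
  fixes X :: "complex mat"
  assumes "P \<in> carrier_mat n n" and "X \<in> carrier_mat n n"
  shows "mat_adjoint (mat_adjoint P * X * P) = mat_adjoint P * mat_adjoint X * P"
  using assms by (simp add: mat_adjoint_mult[of _ n n _ n] mult_carrier_mat[of _ n n _ n]
      assoc_mult_mat[of _ n n _ n _ n])

theorem normal_spectral_decomposition:
  fixes A :: "complex mat"
  assumes A: "A \<in> carrier_mat n n" and normal: "A * mat_adjoint A = mat_adjoint A * A"
    and cp: "char_poly A = (\<Prod>e\<leftarrow>es. [:-e, 1:])"
  obtains Q where "unitary_mat n Q" and "A = Q * mat_diag n (\<lambda>k. es ! k) * mat_adjoint Q"
proof -
  obtain Q T where Q: "unitary_mat n Q" and T: "T \<in> carrier_mat n n" "upper_triangular T"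
    "diag_mat T = es" and A_eq: "A = Q * T * mat_adjoint Q"
    using unitary_schur[OF A cp] by blast
  have Qc: "Q \<in> carrier_mat n n" using Q by (rule unitary_mat_carrier)
  have T_eq: "T = mat_adjoint Q * A * Q"
    using unitary_conjugate_cancel[OF Q T(1)] A_eq by simp
  have "T * mat_adjoint T = mat_adjoint T * T"
    unfolding T_eq mat_adjoint_unitary_conjugate[OF Qc A]
    using unitary_conjugate_mult[OF Q] A normal by simp
  then have "diagonal_mat T" using normal_upper_triangular_diagonal T by blast
  then have "T = mat_diag n (\<lambda>k. es ! k)"
    using T by (intro eq_matI) (auto simp: mat_diag_def diagonal_mat_def diag_mat_def)
  with Q A_eq show thesis by (intro that) auto
qed

lemma char_poly_factorized_nonzero_first:
  fixes A :: "complex mat"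
  assumes "A \<in> carrier_mat n n"
  obtains es z where "char_poly A = (\<Prod>e\<leftarrow>es. [:-e, 1:])" and "length es = n" and "z \<le> n"
    and "\<And>k. k < n \<Longrightarrow> es ! k \<noteq> 0 \<longleftrightarrow> k < z"
proof -
  obtain as where cp: "char_poly A = (\<Prod>a\<leftarrow>as. [:-a, 1:])" and len: "length as = n"
    using char_poly_factorized[OF assms] by blast
  define es where "es = filter (\<lambda>x. x \<noteq> 0) as @ filter (\<lambda>x. x = 0) as"
  define z where "z = length (filter (\<lambda>x. x \<noteq> 0) as)"
  have "mset es = mset as" unfolding es_def by (induction as) auto
  then have "char_poly A = (\<Prod>e\<leftarrow>es. [:-e, 1:])" "length es = n"
    using cp len by (auto simp flip: prod_mset_prod_list dest: mset_eq_length)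
  moreover have "z \<le> n" using len length_filter_le[of _ as] by (simp add: z_def)
  moreover have "es ! k \<noteq> 0 \<longleftrightarrow> k < z" if "k < n" for k
  proof (cases "k < z")
    case True
    then show ?thesis unfolding es_def z_def
      by (simp add: nth_append) (metis (mono_tags) mem_Collect_eq nth_mem set_filter)
  next
    case False
    with that \<open>length es = n\<close> have "k - z < length (filter (\<lambda>x. x = 0) as)"
      by (simp add: es_def z_def)
    with False show ?thesis unfolding es_def z_def
      by (simp add: nth_append) (metis (mono_tags) mem_Collect_eq nth_mem set_filter)
  qed
  ultimately show thesis using that by blast
qed

lemma mat_diag_gram_real_nonneg:
  fixes B :: "complex mat"
  assumes "mat_diag n f = B * mat_adjoint B" and "k < n"
  shows "f k = of_real (Re (f k))" and "0 \<le> Re (f k)"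
proof -
  have "k < dim_row B" using arg_cong[OF assms(1), of dim_row] assms(2) by (simp add: mat_diag_def)
  then have "f k = of_real (\<Sum>j<dim_col B. (cmod (B $$ (k, j)))\<^sup>2)"
    using mult_mat_adjoint_diag(1)[of k B] arg_cong[OF assms(1), of "\<lambda>M. M $$ (k, k)"] assms(2)
    by (simp add: mat_diag_def del: of_real_sum of_real_power)
  then show "f k = of_real (Re (f k))" and "0 \<le> Re (f k)" by (auto intro: sum_nonneg)
qed

lemma gram_mat_spectral:
  fixes C :: "complex mat"
  assumes C: "C \<in> carrier_mat n m"
  obtains Q d z where "unitary_mat n Q"
    and "C * mat_adjoint C = Q * mat_diag n (\<lambda>k. of_real (d k)) * mat_adjoint Q"
    and "\<And>k. k < n \<Longrightarrow> 0 \<le> d k" and "z \<le> n" and "\<And>k. k < n \<Longrightarrow> 0 < d k \<longleftrightarrow> k < z"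
proof -
  define R where "R = C * mat_adjoint C"
  have R: "R \<in> carrier_mat n n" using C by (simp add: R_def)
  have "mat_adjoint R = R" using mat_adjoint_mult[OF C, of "mat_adjoint C" n] C by (simp add: R_def)
  obtain es z where cp: "char_poly R = (\<Prod>e\<leftarrow>es. [:-e, 1:])" and "length es = n" "z \<le> n"
    and support: "\<And>k. k < n \<Longrightarrow> es ! k \<noteq> 0 \<longleftrightarrow> k < z"
    using char_poly_factorized_nonzero_first[OF R] by blast
  obtain Q where Q: "unitary_mat n Q" and R_eq: "R = Q * mat_diag n (\<lambda>k. es ! k) * mat_adjoint Q"
    using normal_spectral_decomposition[OF R _ cp] \<open>mat_adjoint R = R\<close> by metis
  have Qc: "Q \<in> carrier_mat n n" using Q by (rule unitary_mat_carrier)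
  have "mat_diag n (\<lambda>k. es ! k) = mat_adjoint Q * R * Q"
    using unitary_conjugate_cancel[OF Q] R_eq by simp
  also have "\<dots> = (mat_adjoint Q * C) * mat_adjoint (mat_adjoint Q * C)"
    unfolding R_def using Qc C
    by (simp add: mat_adjoint_mult[of _ n n C m] assoc_mult_mat[of _ n n _ m _ n]
        assoc_mult_mat[of _ n m _ n _ n] assoc_mult_mat[of _ n n _ n _ n]
        mult_carrier_mat[of _ n n _ m] mult_carrier_mat[of _ n m _ n] mult_carrier_mat[of _ m n _ n])
  finally have gram: "mat_diag n (\<lambda>k. es ! k) = \<dots>" .
  define d where "d k = Re (es ! k)" for k
  have es_d: "es ! k = of_real (d k)" and d0: "0 \<le> d k" if "k < n" for k
    using mat_diag_gram_real_nonneg[OF gram that] by (simp_all add: d_def)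
  have "mat_diag n (\<lambda>k. es ! k) = mat_diag n (\<lambda>k. of_real (d k))"
    using es_d by (intro eq_matI) (auto simp: mat_diag_def)
  moreover have "0 < d k \<longleftrightarrow> k < z" if "k < n" for k
    using support[OF that] es_d[OF that] d0[OF that] by auto
  ultimately show thesis using that Q R_eq d0 \<open>z \<le> n\<close> unfolding R_def by auto
qed

section \<open>Rank and trace\<close>

lemma (in vec_space) mult_mat_vec_in_span_cols:
  assumes A: "A \<in> carrier_mat n k" and v: "v \<in> carrier_vec k"
  shows "A *\<^sub>v v \<in> span (set (cols A))"
proof -
  have "vec k (\<lambda>i. v $ i) = v" using v by (intro eq_vecI) auto
  moreover have "\<forall>w \<in> set (cols A). dim_vec w = n" using A by (auto simp: cols_def)
  ultimately have "A *\<^sub>v v = lincomb_list (\<lambda>i. v $ i) (cols A)"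
    using lincomb_list_as_mat_mult[of "cols A" "\<lambda>i. v $ i"] A mat_of_cols_cols[of A] by auto
  also have "\<dots> \<in> span (set (cols A))"
    using span_list_as_span[of "cols A"] A cols_dim unfolding span_list_def by blast
  finally show ?thesis .
qed

lemma (in vec_space) rank_mult_le:
  assumes A: "A \<in> carrier_mat n k" and B: "B \<in> carrier_mat k l"
  shows "rank (A * B) \<le> rank A"
proof -
  define S where "S = span (set (cols A))"
  have cols_A: "set (cols A) \<subseteq> carrier_vec n" and cols_AB: "set (cols (A * B)) \<subseteq> carrier_vec n"
    using A B cols_dim by (blast, fastforce)
  have S: "VectorSpace.subspace class_ring S V" unfolding S_def using span_is_subspace cols_A by auto
  have "set (cols (A * B)) \<subseteq> S"
  proof
    fix x assume "x \<in> set (cols (A * B))"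
    then obtain j where "j < l" "x = col (A * B) j"
      using A B by (auto simp: in_set_conv_nth cols_length)
    then have "j < l" "x = A *\<^sub>v col B j" using A B by (auto simp: col_mult2 simp del: col_mult)
    then show "x \<in> S" unfolding S_def using mult_mat_vec_in_span_cols[OF A] B by auto
  qed
  then have "span (set (cols (A * B))) \<subseteq> S"
    using span_is_subset S unfolding subspace_def by auto
  from nested_subspaces[OF S span_is_subspace[OF cols_AB] this]
  have sub: "VectorSpace.subspace class_ring (span (set (cols (A * B)))) (vs S)" .
  have "A * B \<in> carrier_mat n l" using A B by simp
  from fin_dim_span_cols[OF this] show ?thesis
    unfolding rank_def
    using vectorspace.subspace_dim[OF subspace_is_vs[OF S] sub] fin_dim_span_cols[OF A]
    unfolding S_def by simp
qed

lemma (in vec_space) rank_of_left_invertible: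
  assumes Y: "Y \<in> carrier_mat n z" and X: "X \<in> carrier_mat z n" and XY: "X * Y = 1\<^sub>m z"
  shows "rank Y = z"
proof (rule lin_indpt_full_rank[OF Y])
  show dist: "distinct (cols Y)"
  proof (rule ccontr)
    assume "\<not> distinct (cols Y)"
    then obtain a b where "a \<noteq> b" "a < z" "b < z" "col Y a = col Y b"
      using Y by (auto simp: distinct_conv_nth cols_length)
    then have "col (X * Y) a $ a = col (X * Y) b $ a" using X Y by auto
    with \<open>a \<noteq> b\<close> \<open>a < z\<close> \<open>b < z\<close> show False unfolding XY by auto
  qed
  show "lin_indpt (set (cols Y))"
  proof
    assume "lin_dep (set (cols Y))"
    then obtain v where v: "v \<in> carrier_vec z" "v \<noteq> 0\<^sub>v z" "Y *\<^sub>v v = 0\<^sub>v n"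
      using lin_depE[OF Y _ dist] by blast
    have "v = (X * Y) *\<^sub>v v" using v by (simp add: XY)
    also have "\<dots> = X *\<^sub>v (Y *\<^sub>v v)" using X Y v by (simp add: assoc_mult_mat_vec)
    also have "\<dots> = 0\<^sub>v z" using v(3) X by (auto intro!: eq_vecI)
    finally show False using v(2) by simp
  qed
qed

lemma mult_mat_diag_mult_index:
  assumes "A \<in> carrier_mat n k" "B \<in> carrier_mat k m" "i < n" "j < m"
  shows "(A * mat_diag k f * B) $$ (i, j) = (\<Sum>l<k. A $$ (i, l) * f l * B $$ (l, j))"
  using assms by (simp add: mat_diag_mult_right scalar_prod_def lessThan_atLeast0)

lemma rank_isometry_mat_diag:
  fixes U :: "complex mat"
  assumes U: "U \<in> carrier_mat n z" and isometry: "mat_adjoint U * U = 1\<^sub>m z"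
    and f: "\<And>k. k < z \<Longrightarrow> f k \<noteq> 0"
  shows "vec_space.rank n (U * mat_diag z f * mat_adjoint U) = z"
proof -
  interpret vec_space "TYPE(complex)" n .
  define R where "R = U * mat_diag z f * mat_adjoint U"
  have R: "R \<in> carrier_mat n n" using U by (auto simp: R_def)
  have "rank R \<le> rank U"
    unfolding R_def using U rank_mult_le[OF U, of "mat_diag z f * mat_adjoint U" n]
    by (simp add: assoc_mult_mat[of _ n z _ z _ n] mult_carrier_mat[of _ z z _ n])
  also have "\<dots> \<le> z" by (rule rank_le_nc[OF U])
  finally have "rank R \<le> z" .
  moreover have "rank R \<ge> z"
  proof -
    have "mat_diag z f * mat_diag z (\<lambda>k. 1 / f k) = mat_diag z (\<lambda>k. f k * (1 / f k))"
      by (rule mat_diag_diag)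
    also have "\<dots> = 1\<^sub>m z" using f by (intro eq_matI) (auto simp: mat_diag_def)
    finally have inverse: "mat_diag z f * mat_diag z (\<lambda>k. 1 / f k) = 1\<^sub>m z" .
    have "R * (U * mat_diag z (\<lambda>k. 1 / f k))
        = U * (mat_diag z f * ((mat_adjoint U * U) * mat_diag z (\<lambda>k. 1 / f k)))"
      unfolding R_def using U
      by (simp add: assoc_mult_mat[of _ n z _ z _ n] assoc_mult_mat[of _ n z _ z _ z]
          assoc_mult_mat[of _ z z _ n _ z] assoc_mult_mat[of _ z n _ z _ z]
          assoc_mult_mat[of _ n z _ n _ z] mult_carrier_mat[of _ z z _ n]
          mult_carrier_mat[of _ n z _ z])
    also have "\<dots> = U"
      by (simp only: isometry left_mult_one_mat[OF mat_diag_dim] inverse right_mult_one_mat[OF U])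
    finally have "rank U \<le> rank R"
      using rank_mult_le[OF R, of "U * mat_diag z (\<lambda>k. 1 / f k)" z] U by simp
    then show ?thesis using rank_of_left_invertible[OF U _ isometry] U by simp
  qed
  ultimately show ?thesis unfolding R_def by simp
qed

lemma rank_unitary_conjugate_mat_diag:
  fixes f :: "nat \<Rightarrow> complex"
  assumes Q: "unitary_mat n Q" and z: "z \<le> n" and f: "\<And>k. k < n \<Longrightarrow> f k \<noteq> 0 \<longleftrightarrow> k < z"
  shows "vec_space.rank n (Q * mat_diag n f * mat_adjoint Q) = z"
proof -
  have Qc: "Q \<in> carrier_mat n n" using Q by (rule unitary_mat_carrier)
  have f0: "f l = 0" if "z \<le> l" "l < n" for l using f[of l] that by simp
  define U where "U = mat n z (\<lambda>(i, l). Q $$ (i, l))"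
  have U: "U \<in> carrier_mat n z" by (simp add: U_def)
  have "mat_adjoint U * U = 1\<^sub>m z"
  proof (rule eq_matI)
    fix a b assume ab: "a < dim_row (1\<^sub>m z :: complex mat)" "b < dim_col (1\<^sub>m z :: complex mat)"
    then have "(mat_adjoint U * U) $$ (a, b) = (mat_adjoint Q * Q) $$ (a, b)"
      using z Qc by (auto simp: U_def scalar_prod_def)
    then show "(mat_adjoint U * U) $$ (a, b) = 1\<^sub>m z $$ (a, b)"
      using Q ab z by (simp add: unitary_mat_def)
  qed (use U in auto)
  moreover have "Q * mat_diag n f * mat_adjoint Q = U * mat_diag z f * mat_adjoint U"
  proof (rule eq_matI)
    fix i j assume "i < dim_row (U * mat_diag z f * mat_adjoint U)"
      "j < dim_col (U * mat_diag z f * mat_adjoint U)"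
    then have i: "i < n" and j: "j < n" using U by auto
    have "(Q * mat_diag n f * mat_adjoint Q) $$ (i, j) = (\<Sum>l<n. Q $$ (i, l) * f l * cnj (Q $$ (j, l)))"
      using mult_mat_diag_mult_index[of Q n n "mat_adjoint Q" n i j f] Qc i j
      by (simp del: index_mult_mat)
    also have "\<dots> = (\<Sum>l<z. Q $$ (i, l) * f l * cnj (Q $$ (j, l)))"
      using z f0 by (intro sum.mono_neutral_right) auto
    also have "\<dots> = (U * mat_diag z f * mat_adjoint U) $$ (i, j)"
      using mult_mat_diag_mult_index[of U n z "mat_adjoint U" n i j f] U i j
      by (simp add: U_def del: index_mult_mat)
    finally show "(Q * mat_diag n f * mat_adjoint Q) $$ (i, j) = (U * mat_diag z f * mat_adjoint U) $$ (i, j)" .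
  qed (use U Qc in auto)
  ultimately show ?thesis using rank_isometry_mat_diag[OF U] f z by simp
qed

definition mat_trace :: "'a :: comm_ring_1 mat \<Rightarrow> 'a" where
  "mat_trace A = (\<Sum>i<dim_row A. A $$ (i, i))"

lemma mat_trace_mult_comm:
  assumes A: "A \<in> carrier_mat n k" and B: "B \<in> carrier_mat k n"
  shows "mat_trace (A * B) = mat_trace (B * A)"
proof -
  have "mat_trace (A * B) = (\<Sum>i<n. \<Sum>l<k. A $$ (i, l) * B $$ (l, i))"
    using A B by (auto simp: mat_trace_def scalar_prod_def lessThan_atLeast0 intro!: sum.cong)
  also have "\<dots> = (\<Sum>l<k. \<Sum>i<n. B $$ (l, i) * A $$ (i, l))"
    by (subst sum.swap) (simp add: mult.commute)
  also have "\<dots> = mat_trace (B * A)"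
    using A B by (auto simp: mat_trace_def scalar_prod_def lessThan_atLeast0 intro!: sum.cong)
  finally show ?thesis .
qed

lemma mat_trace_unitary_conjugate:
  assumes Q: "unitary_mat n Q" and T: "T \<in> carrier_mat n n"
  shows "mat_trace (Q * T * mat_adjoint Q) = mat_trace T"
proof -
  have Qc: "Q \<in> carrier_mat n n" using Q by (rule unitary_mat_carrier)
  have "mat_trace (Q * T * mat_adjoint Q) = mat_trace (mat_adjoint Q * (Q * T))"
    using Qc T by (intro mat_trace_mult_comm[of _ n n]) auto
  also have "mat_adjoint Q * (Q * T) = T"
    using Q Qc T by (simp add: assoc_mult_mat[symmetric, of _ n n Q n T n] unitary_mat_def)
  finally show ?thesis .
qed

lemma mat_trace_conjugated_mat_diag_mult:
  fixes e d :: "nat \<Rightarrow> complex"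
  assumes P: "P \<in> carrier_mat n n" and Q: "Q \<in> carrier_mat n n"
  shows "mat_trace (P * mat_diag n e * mat_adjoint P * (Q * mat_diag n d * mat_adjoint Q))
    = (\<Sum>k<n. \<Sum>l<n. e k * d l * (cmod ((mat_adjoint P * Q) $$ (k, l)))\<^sup>2)"
proof -
  define V where "V = mat_adjoint P * Q"
  have V: "V \<in> carrier_mat n n" using P Q by (auto simp: V_def)
  have V_adj: "mat_adjoint V = mat_adjoint Q * P"
    using mat_adjoint_mult[of "mat_adjoint P" n n Q n] P Q by (simp add: V_def)
  let ?E = "mat_diag n e" and ?D = "mat_diag n d"
  have "mat_trace (P * ?E * mat_adjoint P * (Q * ?D * mat_adjoint Q))
      = mat_trace (P * (?E * (mat_adjoint P * (Q * ?D * mat_adjoint Q))))"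
    using P Q by (simp add: mult_carrier_mat[of _ n n _ n] assoc_mult_mat[of _ n n _ n _ n])
  also have "\<dots> = mat_trace (?E * (mat_adjoint P * (Q * ?D * mat_adjoint Q)) * P)"
    using P Q by (intro mat_trace_mult_comm[of _ n n]) (auto simp: mult_carrier_mat[of _ n n _ n])
  also have "?E * (mat_adjoint P * (Q * ?D * mat_adjoint Q)) * P = ?E * (V * ?D * mat_adjoint V)"
    using P Q unfolding V_adj
    by (simp add: V_def mult_carrier_mat[of _ n n _ n] assoc_mult_mat[of _ n n _ n _ n])
  also have "mat_trace \<dots> = (\<Sum>k<n. e k * (V * ?D * mat_adjoint V) $$ (k, k))"
  proof -
    have "V * ?D * mat_adjoint V \<in> carrier_mat n n" using V by (simp add: mult_carrier_mat[of _ n n _ n])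
    then show ?thesis by (simp add: mat_trace_def mat_diag_mult_left)
  qed
  also have "\<dots> = (\<Sum>k<n. \<Sum>l<n. e k * d l * (cmod (V $$ (k, l)))\<^sup>2)"
    using V mult_mat_diag_mult_index[of V n n "mat_adjoint V" n]
    by (auto simp: sum_distrib_left mult_ac simp flip: complex_norm_square intro!: sum.cong
        simp del: index_mult_mat)
  finally show ?thesis by (simp add: V_def)
qed

lemma mat_trace_unitary_conjugated_mat_diag_mult:
  fixes e d :: "nat \<Rightarrow> complex"
  assumes Q: "unitary_mat n Q"
  shows "mat_trace (Q * mat_diag n e * mat_adjoint Q * (Q * mat_diag n d * mat_adjoint Q))
    = (\<Sum>k<n. e k * d k)"
proof -
  have "(\<Sum>l<n. e k * d l * (cmod ((mat_adjoint Q * Q) $$ (k, l)))\<^sup>2) = e k * d k" if "k < n" for k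
    using Q that by (subst sum.remove[of _ k]) (auto simp: unitary_mat_def intro!: sum.neutral)
  then show ?thesis
    by (simp add: mat_trace_conjugated_mat_diag_mult[OF unitary_mat_carrier[OF Q] unitary_mat_carrier[OF Q]])
qed

section \<open>The reduced state of a bipartite vector\<close>

lemma sum_lessThan_mult:
  fixes g :: "nat \<Rightarrow> 'a :: comm_monoid_add"
  shows "(\<Sum>k<n * m. g k) = (\<Sum>i<n. \<Sum>j<m. g (i * m + j))"
proof -
  have "(\<Sum>k<n * m. g k) = (\<Sum>i<n. \<Sum>k\<in>{i * m..<i * m + m}. g k)"
    using sum.nat_group[of g m n] by (simp add: mult.commute)
  also have "\<dots> = (\<Sum>i<n. \<Sum>j<m. g (i * m + j))"
  proof (rule sum.cong[OF refl])
    fix i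
    have "(\<Sum>k\<in>{i * m..<i * m + m}. g k) = (\<Sum>k\<in>{0 + i * m..<m + i * m}. g k)"
      by (simp add: add.commute)
    also have "\<dots> = (\<Sum>j<m. g (i * m + j))"
      by (simp only: sum.shift_bounds_nat_ivl lessThan_atLeast0 add.commute)
    finally show "(\<Sum>k\<in>{i * m..<i * m + m}. g k) = (\<Sum>j<m. g (i * m + j))" .
  qed
  finally show ?thesis .
qed

lemma mult_add_less_mult:
  fixes i j n m :: nat
  assumes "i < n" and "j < m"
  shows "i * m + j < n * m"
proof -
  have "i * m + j < (i + 1) * m" using assms by simp
  also have "\<dots> \<le> n * m" using assms by (intro mult_right_mono) auto
  finally show ?thesis .
qed

definition coeff_mat :: "nat \<Rightarrow> nat \<Rightarrow> complex vec \<Rightarrow> complex mat" where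
  "coeff_mat dA dB psi = mat dA dB (\<lambda>(i, j). psi $ (i * dB + j))"

lemma coeff_mat_carrier [simp]: "coeff_mat dA dB psi \<in> carrier_mat dA dB"
  by (simp add: coeff_mat_def)

lemma partial_trace_B_eq_coeff_mat:
  "partial_trace_B dA dB psi = coeff_mat dA dB psi * mat_adjoint (coeff_mat dA dB psi)"
  by (rule eq_matI) (auto simp: partial_trace_B_def coeff_mat_def scalar_prod_def lessThan_atLeast0)

lemma mat_trace_partial_trace_B:
  assumes "psi \<in> carrier_vec (dA * dB)"
  shows "mat_trace (partial_trace_B dA dB psi) = psi \<bullet>c psi"
  using assms sum_lessThan_mult[of "\<lambda>k. psi $ k * cnj (psi $ k)" dA dB]
  by (simp add: mat_trace_def partial_trace_B_def scalar_prod_def lessThan_atLeast0)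

lemma expval_tensor_id:
  assumes W: "W \<in> carrier_mat dA dA" and psi: "psi \<in> carrier_vec (dA * dB)"
  shows "expval psi (tensor_id dA dB W) = mat_trace (W * partial_trace_B dA dB psi)"
proof -
  let ?M = "tensor_id dA dB W"
  have Mv: "(?M *\<^sub>v psi) $ (i * dB + j) = (\<Sum>i'<dA. W $$ (i, i') * psi $ (i' * dB + j))"
    if i: "i < dA" and j: "j < dB" for i j
  proof -
    have k: "i * dB + j < dA * dB" using mult_add_less_mult[OF i j] .
    have "(?M *\<^sub>v psi) $ (i * dB + j) = (\<Sum>l<dA * dB. ?M $$ (i * dB + j, l) * psi $ l)"
      using k psi by (simp add: tensor_id_def scalar_prod_def lessThan_atLeast0)
    also have "\<dots> = (\<Sum>i'<dA. \<Sum>j'<dB. if j' = j then W $$ (i, i') * psi $ (i' * dB + j') else 0)"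
      unfolding sum_lessThan_mult using k j mult_add_less_mult
      by (intro sum.cong refl) (auto simp: tensor_id_def)
    also have "\<dots> = (\<Sum>i'<dA. W $$ (i, i') * psi $ (i' * dB + j))"
      using j by (simp add: sum.delta)
    finally show ?thesis .
  qed
  have "expval psi ?M = (\<Sum>k<dA * dB. (?M *\<^sub>v psi) $ k * cnj (psi $ k))"
    unfolding expval_def using psi by (simp add: scalar_prod_def lessThan_atLeast0 tensor_id_def)
  also have "\<dots> = (\<Sum>i<dA. \<Sum>j<dB. (?M *\<^sub>v psi) $ (i * dB + j) * cnj (psi $ (i * dB + j)))"
    by (rule sum_lessThan_mult)
  also have "\<dots> = (\<Sum>i<dA. \<Sum>j<dB. \<Sum>i'<dA.
      W $$ (i, i') * (psi $ (i' * dB + j) * cnj (psi $ (i * dB + j))))"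
    by (intro sum.cong refl) (simp add: Mv sum_distrib_right mult.assoc)
  also have "\<dots> = (\<Sum>i<dA. \<Sum>i'<dA. W $$ (i, i') *
      (\<Sum>j<dB. psi $ (i' * dB + j) * cnj (psi $ (i * dB + j))))"
    by (rule sum.cong[OF refl], subst sum.swap) (simp add: sum_distrib_left)
  also have "\<dots> = mat_trace (W * partial_trace_B dA dB psi)"
    using W by (auto simp: mat_trace_def partial_trace_B_def scalar_prod_def lessThan_atLeast0
        intro!: sum.cong)
  finally show ?thesis .
qed

lemma partial_trace_B_spectral:
  assumes "unit_state dA dB psi"
  obtains Q d z where "unitary_mat dA Q"
    and "partial_trace_B dA dB psi = Q * mat_diag dA (\<lambda>k. of_real (d k)) * mat_adjoint Q"
    and "\<And>k. k < dA \<Longrightarrow> 0 \<le> d k" and "(\<Sum>k<dA. d k) = 1" and "z \<le> dA"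
    and "\<And>k. k < dA \<Longrightarrow> 0 < d k \<longleftrightarrow> k < z" and "schmidt_rank dA dB psi = z"
proof -
  obtain Q d z where Q: "unitary_mat dA Q"
    and R: "partial_trace_B dA dB psi = Q * mat_diag dA (\<lambda>k. of_real (d k)) * mat_adjoint Q"
    and d0: "\<And>k. k < dA \<Longrightarrow> 0 \<le> d k" and z: "z \<le> dA"
    and support: "\<And>k. k < dA \<Longrightarrow> 0 < d k \<longleftrightarrow> k < z"
    unfolding partial_trace_B_eq_coeff_mat by (elim gram_mat_spectral[OF coeff_mat_carrier])
  have "(1 :: complex) = mat_trace (partial_trace_B dA dB psi)"
    using assms by (simp add: unit_state_def mat_trace_partial_trace_B)
  also have "\<dots> = (\<Sum>k<dA. of_real (d k))"
    unfolding R mat_trace_unitary_conjugate[OF Q mat_diag_dim] by (simp add: mat_trace_def mat_diag_def)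
  finally have "(\<Sum>k<dA. d k) = 1" by (metis of_real_eq_1_iff of_real_sum)
  moreover have "schmidt_rank dA dB psi = z"
    using rank_unitary_conjugate_mat_diag[OF Q z, of "\<lambda>k. of_real (d k)"] support d0
    unfolding schmidt_rank_def R by (simp add: less_le)
  ultimately show thesis using that Q R d0 z support by blast
qed

section \<open>Convex combinations of unimodular numbers\<close>

lemma cmod_sum_convex_phases_sq_le:
  fixes s :: "nat \<Rightarrow> real" and t :: "nat \<Rightarrow> complex"
  assumes s0: "\<And>k. k < n \<Longrightarrow> 0 \<le> s k" and s1: "(\<Sum>k<n. s k) = 1"
    and t1: "\<And>k. k < n \<Longrightarrow> cmod (t k) = 1" and \<gamma>: "0 \<le> \<gamma>"
    and gap: "\<And>k k'. k < n \<Longrightarrow> k' < n \<Longrightarrow> t k \<noteq> t k' \<Longrightarrow> Re (t k * cnj (t k')) \<le> 1 - \<gamma>"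
    and level: "\<And>k. k < n \<Longrightarrow> (\<Sum>k'<n. if t k' = t k then s k' else 0) \<le> 1 - \<delta>"
  shows "(cmod (\<Sum>k<n. of_real (s k) * t k))\<^sup>2 \<le> 1 - \<gamma> * \<delta>"
proof -
  define x where "x = (\<Sum>k<n. of_real (s k) * t k)"
  define same where "same k k' = (if t k' = t k then 1 else 0 :: real)" for k k'
  have "(cmod x)\<^sup>2 = Re (x * cnj x)" by (simp flip: complex_norm_square)
  also have "\<dots> = (\<Sum>k<n. \<Sum>k'<n. s k * s k' * Re (t k * cnj (t k')))"
    by (simp add: x_def cnj_sum sum_product Re_sum algebra_simps)
  also have "\<dots> \<le> (\<Sum>k<n. \<Sum>k'<n. s k * s k' * ((1 - \<gamma>) + \<gamma> * same k k'))"
  proof (intro sum_mono mult_left_mono)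
    fix k k' assume "k \<in> {..<n}" "k' \<in> {..<n}"
    then show "0 \<le> s k * s k'" using s0 by simp
    have "Re (t k * cnj (t k)) = 1" using t1 \<open>k \<in> _\<close> by (simp flip: complex_norm_square)
    then show "Re (t k * cnj (t k')) \<le> (1 - \<gamma>) + \<gamma> * same k k'"
      using gap[of k k'] \<open>k \<in> _\<close> \<open>k' \<in> _\<close> by (auto simp: same_def)
  qed
  also have "\<dots> = (\<Sum>k<n. \<Sum>k'<n. (1 - \<gamma>) * (s k * s k')
      + \<gamma> * (s k * (if t k' = t k then s k' else 0)))"
    by (intro sum.cong refl) (simp add: same_def algebra_simps)
  also have "\<dots> = (1 - \<gamma>) * (\<Sum>k<n. s k) * (\<Sum>k'<n. s k')
      + \<gamma> * (\<Sum>k<n. s k * (\<Sum>k'<n. if t k' = t k then s k' else 0))"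
    by (simp add: sum.distrib sum_distrib_left sum_product mult_ac)
  also have "\<dots> \<le> (1 - \<gamma>) + \<gamma> * (\<Sum>k<n. s k * (1 - \<delta>))"
    using s1 s0 level \<gamma> by (auto intro!: mult_left_mono sum_mono)
  also have "\<dots> = 1 - \<gamma> * \<delta>" by (simp add: s1 flip: sum_distrib_right) (simp add: algebra_simps)
  finally show ?thesis unfolding x_def .
qed

lemma sum_convex_weights_le:
  fixes d w :: "nat \<Rightarrow> real"
  assumes "z \<le> n" and d0: "\<And>l. l < n \<Longrightarrow> 0 \<le> d l" and d1: "(\<Sum>l<n. d l) = 1"
    and "0 \<le> \<delta>" and d\<delta>: "\<And>l. l < z \<Longrightarrow> \<delta> \<le> d l"
    and w: "\<And>l. l < n \<Longrightarrow> 0 \<le> w l \<and> w l \<le> 1" and w_sum: "(\<Sum>l<n. w l) + 1 \<le> real z"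
  shows "(\<Sum>l<n. d l * w l) \<le> 1 - \<delta>"
proof -
  have "(\<Sum>l<z. w l) \<le> (\<Sum>l<n. w l)"
    using assms(1) w by (intro sum_mono2) auto
  then have "\<delta> \<le> \<delta> * (\<Sum>l<z. 1 - w l)"
    using w_sum \<open>0 \<le> \<delta>\<close> by (simp add: sum_subtractf mult_le_cancel_left1)
  also have "\<dots> \<le> (\<Sum>l<z. d l * (1 - w l))"
    using d\<delta> w assms(1) by (auto simp: sum_distrib_left intro!: sum_mono mult_right_mono)
  also have "\<dots> \<le> (\<Sum>l<n. d l * (1 - w l))"
    using assms(1) d0 w by (intro sum_mono2) auto
  also have "\<dots> = 1 - (\<Sum>l<n. d l * w l)" using d1 by (simp add: algebra_simps sum_subtractf)
  finally show ?thesis by simp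
qed

lemma unitary_mixing_sum:
  fixes d :: "nat \<Rightarrow> real"
  assumes "unitary_mat n V" and "(\<Sum>l<n. d l) = 1"
  shows "(\<Sum>k<n. \<Sum>l<n. d l * (cmod (V $$ (k, l)))\<^sup>2) = 1"
  using assms unitary_mat_col_norm[OF assms(1)]
  by (subst sum.swap) (simp add: flip: sum_distrib_left)

text \<open>Mixing by a unitary cannot concentrate z weights of size at least delta on fewer than
  z coordinates.\<close>

lemma unitary_mixing_subset_le:
  fixes d :: "nat \<Rightarrow> real"
  assumes V: "unitary_mat n V" and "z \<le> n" and d0: "\<And>l. l < n \<Longrightarrow> 0 \<le> d l"
    and d1: "(\<Sum>l<n. d l) = 1" and "0 \<le> \<delta>" and d\<delta>: "\<And>l. l < z \<Longrightarrow> \<delta> \<le> d l"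
    and K: "K \<subseteq> {..<n}" and card_K: "card K + 1 \<le> z"
  shows "(\<Sum>k\<in>K. \<Sum>l<n. d l * (cmod (V $$ (k, l)))\<^sup>2) \<le> 1 - \<delta>"
proof -
  define w where "w l = (\<Sum>k\<in>K. (cmod (V $$ (k, l)))\<^sup>2)" for l
  have "(\<Sum>k\<in>K. \<Sum>l<n. d l * (cmod (V $$ (k, l)))\<^sup>2) = (\<Sum>l<n. d l * w l)"
    unfolding w_def by (subst sum.swap) (simp add: sum_distrib_left)
  also have "\<dots> \<le> 1 - \<delta>"
  proof (rule sum_convex_weights_le[OF assms(2) d0 d1 \<open>0 \<le> \<delta>\<close> d\<delta>])
    fix l assume l: "l < n"
    have "w l \<le> (\<Sum>k<n. (cmod (V $$ (k, l)))\<^sup>2)"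
      unfolding w_def using K by (intro sum_mono2) auto
    then show "0 \<le> w l \<and> w l \<le> 1"
      using unitary_mat_col_norm[OF V l] by (auto simp: w_def intro: sum_nonneg)
  next
    have "(\<Sum>l<n. w l) = (\<Sum>k\<in>K. \<Sum>l<n. (cmod (V $$ (k, l)))\<^sup>2)"
      unfolding w_def by (rule sum.swap)
    also have "\<dots> = card K" using K unitary_mat_row_norm[OF V] by (simp add: subset_eq)
    finally show "(\<Sum>l<n. w l) + 1 \<le> real z" using card_K by simp
  qed
  finally show ?thesis .
qed

lemma unit_circle_Re_mult_cnj_lt_1:
  fixes a b :: complex
  assumes a: "cmod a = 1" and b: "cmod b = 1" and "a \<noteq> b"
  shows "Re (a * cnj b) < 1"
proof (rule ccontr)
  let ?c = "a * cnj b"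
  assume "\<not> Re ?c < 1"
  moreover have c: "cmod ?c = 1" using a b by (simp add: norm_mult)
  ultimately have re: "Re ?c = 1" using complex_Re_le_cmod[of ?c] by simp
  have "(cmod ?c)\<^sup>2 = (Re ?c)\<^sup>2 + (Im ?c)\<^sup>2" by (rule cmod_power2)
  then have "Im ?c = 0" using c re by simp
  then have c1: "?c = 1" using re by (simp add: complex_eq_iff)
  have "cnj b * b = 1" by (metis b complex_norm_square mult.commute of_real_1 power_one)
  then have "a = a * (cnj b * b)" by simp
  also have "\<dots> = ?c * b" by (simp add: mult.assoc)
  also have "\<dots> = b" using c1 by simp
  finally show False using \<open>a \<noteq> b\<close> by simp
qed

lemma unit_circle_finite_gap:
  fixes A :: "complex set"
  assumes "finite A" and "\<And>a. a \<in> A \<Longrightarrow> cmod a = 1"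
  obtains \<gamma> where "0 < \<gamma>" and "\<And>a b. a \<in> A \<Longrightarrow> b \<in> A \<Longrightarrow> a \<noteq> b \<Longrightarrow> Re (a * cnj b) \<le> 1 - \<gamma>"
proof -
  define G where "G = {1 - Re (a * cnj b) | a b. a \<in> A \<and> b \<in> A \<and> a \<noteq> b}"
  have "G \<subseteq> {1 - Re (a * cnj b) | a b. a \<in> A \<and> b \<in> A}" unfolding G_def by blast
  moreover have "finite {1 - Re (a * cnj b) | a b. a \<in> A \<and> b \<in> A}"
    by (rule finite_image_set2) (use assms(1) in simp_all)
  ultimately have "finite G" by (rule finite_subset)
  moreover have "0 < x" if x: "x \<in> G" for x
  proof -
    obtain a b where "a \<in> A" "b \<in> A" "a \<noteq> b" "x = 1 - Re (a * cnj b)"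
      using x unfolding G_def by blast
    then show ?thesis using unit_circle_Re_mult_cnj_lt_1[of a b] assms(2) by simp
  qed
  ultimately have "0 < Min (insert 1 G)" by simp
  moreover have "Re (a * cnj b) \<le> 1 - Min (insert 1 G)" if ab: "a \<in> A" "b \<in> A" "a \<noteq> b" for a b
  proof -
    have "1 - Re (a * cnj b) \<in> G" using ab unfolding G_def by blast
    then have "Min (insert 1 G) \<le> 1 - Re (a * cnj b)" using \<open>finite G\<close> by simp
    then show ?thesis by simp
  qed
  ultimately show thesis by (rule that)
qed

section \<open>Unitaries with prescribed spectrum\<close>

lemma unitary_mat_diag:
  assumes "\<And>k. k < n \<Longrightarrow> cmod (f k) = 1"
  shows "unitary_mat n (mat_diag n f)"
proof (rule unitary_matI)
  have "mat_adjoint (mat_diag n f) = mat_diag n (\<lambda>k. cnj (f k))"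
    by (intro eq_matI) (auto simp: mat_diag_def)
  also have "\<dots> * mat_diag n f = mat_diag n (\<lambda>k. cnj (f k) * f k)" by simp
  also have "\<dots> = 1\<^sub>m n"
    using assms by (intro eq_matI) (auto simp: mat_diag_def mult.commute simp flip: complex_norm_square)
  finally show "mat_adjoint (mat_diag n f) * mat_diag n f = 1\<^sub>m n" .
qed simp

lemma unitary_conjugate_mat_diag_in_W_spec:
  assumes Q: "unitary_mat n Q" and L: "mset L = Lam" "length L = n"
    and unit: "\<forall>a \<in># Lam. cmod a = 1"
  shows "Q * mat_diag n (\<lambda>k. L ! k) * mat_adjoint Q \<in> W_spec n Lam"
proof -
  let ?E = "mat_diag n (\<lambda>k. L ! k)"
  have Qc: "Q \<in> carrier_mat n n" using Q by (rule unitary_mat_carrier)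
  have "unitary_mat n ?E" using unit L by (intro unitary_mat_diag) (metis nth_mem set_mset_mset)
  then have "unitary_mat n (Q * ?E * mat_adjoint Q)"
    by (intro unitary_mat_mult unitary_mat_adjoint Q)
  moreover have "similar_mat (Q * ?E * mat_adjoint Q) ?E"
    using Q Qc by (intro similar_matI[of _ _ Q "mat_adjoint Q" n]) (auto simp: unitary_mat_def)
  then have "char_poly (Q * ?E * mat_adjoint Q) = (\<Prod>a\<leftarrow>diag_mat ?E. [:-a, 1:])"
    by (simp add: char_poly_similar char_poly_upper_triangular[of _ n]
        upper_triangular_def mat_diag_def)
  moreover have "diag_mat ?E = L" using L by (intro nth_equalityI) (auto simp: diag_mat_def mat_diag_def)
  ultimately show ?thesis
    using L by (simp add: W_spec_def flip: prod_mset_prod_list)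
qed

lemma W_spec_spectral:
  assumes W: "W \<in> W_spec n Lam" and "size Lam = n"
  obtains L P where "mset L = Lam" and "length L = n" and "unitary_mat n P"
    and "W = P * mat_diag n (\<lambda>k. L ! k) * mat_adjoint P"
proof -
  obtain L where L: "mset L = Lam" using ex_mset by blast
  have uW: "unitary_mat n W" using W by (simp add: W_spec_def)
  have "char_poly W = (\<Prod>a\<leftarrow>L. [:-a, 1:])"
    using W L by (simp add: W_spec_def flip: prod_mset_prod_list)
  then obtain P where "unitary_mat n P" "W = P * mat_diag n (\<lambda>k. L ! k) * mat_adjoint P"
    using normal_spectral_decomposition[of W n] uW by (auto simp: unitary_mat_def)
  moreover have "length L = n" using L assms(2) by auto
  ultimately show thesis using L that by blast
qed

lemma expval_W_spec_mixture:
  assumes "unit_state n m psi" and W: "W \<in> W_spec n Lam" and "size Lam = n"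
    and Q: "unitary_mat n Q"
    and R: "partial_trace_B n m psi = Q * mat_diag n (\<lambda>k. of_real (d k)) * mat_adjoint Q"
  obtains L V where "mset L = Lam" and "length L = n" and "unitary_mat n V"
    and "expval psi (tensor_id n m W) = (\<Sum>k<n. of_real (\<Sum>l<n. d l * (cmod (V $$ (k, l)))\<^sup>2) * L ! k)"
proof -
  obtain L P where L: "mset L = Lam" "length L = n" and P: "unitary_mat n P"
    and W_eq: "W = P * mat_diag n (\<lambda>k. L ! k) * mat_adjoint P"
    using W_spec_spectral[OF W assms(3)] .
  have Pc: "P \<in> carrier_mat n n" and Qc: "Q \<in> carrier_mat n n"
    using P Q by (simp_all add: unitary_mat_carrier)
  have "expval psi (tensor_id n m W) = mat_trace (W * partial_trace_B n m psi)"
    using assms(1) W by (intro expval_tensor_id) (auto simp: unit_state_def W_spec_def unitary_mat_def)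
  also have "\<dots> = (\<Sum>k<n. of_real (\<Sum>l<n. d l * (cmod ((mat_adjoint P * Q) $$ (k, l)))\<^sup>2) * L ! k)"
    unfolding W_eq R mat_trace_conjugated_mat_diag_mult[OF Pc Qc]
    by (simp add: sum_distrib_left sum_distrib_right mult_ac)
  finally show thesis
    using that[OF L] P Q by (auto intro: unitary_mat_mult unitary_mat_adjoint)
qed

section \<open>Multiplicities\<close>

lemma count_le_max_mult: "count Lam a \<le> max_mult Lam"
proof (cases "a \<in># Lam")
  case True
  then show ?thesis unfolding max_mult_def by (intro Max_ge) auto
qed (simp add: not_in_iff)

lemma max_mult_attained:
  assumes "Lam \<noteq> {#}"
  obtains a where "a \<in># Lam" and "count Lam a = max_mult Lam"
proof -
  have "max_mult Lam \<in> count Lam ` set_mset Lam"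
    unfolding max_mult_def using assms by (intro Max_in) auto
  then show thesis by (auto intro: that)
qed

lemma count_mset_eq_card_indices: "count (mset L) a = card {k. k < length L \<and> L ! k = a}"
  unfolding count_mset count_list_eq_length_filter length_filter_conv_card
  by (rule arg_cong[of _ _ card]) auto

lemma card_set_mset_eq_size_iff: "card (set_mset M) = size M \<longleftrightarrow> (\<forall>a \<in># M. count M a = 1)"
proof -
  have "size M = (\<Sum>a\<in>set_mset M. count M a)"
    by (simp add: size_multiset_overloaded_eq)
  also have "\<dots> = (\<Sum>a\<in>set_mset M. 1 + (count M a - 1))"
    by (intro sum.cong refl) simp
  also have "\<dots> = card (set_mset M) + (\<Sum>a\<in>set_mset M. count M a - 1)"
    by (simp only: sum.distrib card_eq_sum)
  finally have "card (set_mset M) = size M \<longleftrightarrow> (\<forall>a \<in># M. count M a - 1 = 0)" by simp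
  moreover have "count M a - 1 = 0 \<longleftrightarrow> count M a = 1" if "a \<in># M" for a
    using that count_greater_zero_iff[of M a] by (cases "count M a") auto
  ultimately show ?thesis by auto
qed

lemma card_set_mset_eq_size_iff_max_mult:
  assumes "M \<noteq> {#}"
  shows "card (set_mset M) = size M \<longleftrightarrow> max_mult M = 1"
proof -
  obtain \<mu> where \<mu>: "\<mu> \<in># M" "count M \<mu> = max_mult M" using max_mult_attained[OF assms] .
  have "(\<forall>a \<in># M. count M a = 1) \<longleftrightarrow> max_mult M = 1"
    using \<mu> count_le_max_mult[of M] by (auto intro: le_antisym simp: Suc_le_eq)
  then show ?thesis by (simp add: card_set_mset_eq_size_iff)
qed

section \<open>Vanishing of the measure\<close>

lemma expval_W_spec_sq_le_one:
  assumes psi: "unit_state n m psi" and W: "W \<in> W_spec n Lam" and "size Lam = n"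
    and unit: "\<forall>a \<in># Lam. cmod a = 1"
  shows "(cmod (expval psi (tensor_id n m W)))\<^sup>2 \<le> 1"
proof -
  obtain Q d z where Q: "unitary_mat n Q"
    and R: "partial_trace_B n m psi = Q * mat_diag n (\<lambda>k. of_real (d k)) * mat_adjoint Q"
    and d0: "\<And>k. k < n \<Longrightarrow> 0 \<le> d k" and d1: "(\<Sum>k<n. d k) = 1" and "z \<le> n"
    and "\<And>k. k < n \<Longrightarrow> 0 < d k \<longleftrightarrow> k < z" and "schmidt_rank n m psi = z"
    by (elim partial_trace_B_spectral[OF psi])
  obtain L V where L: "mset L = Lam" "length L = n" and V: "unitary_mat n V"
    and ev: "expval psi (tensor_id n m W) = (\<Sum>k<n. of_real (\<Sum>l<n. d l * (cmod (V $$ (k, l)))\<^sup>2) * L ! k)"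
    using expval_W_spec_mixture[OF psi W assms(3) Q R] .
  define s where "s k = (\<Sum>l<n. d l * (cmod (V $$ (k, l)))\<^sup>2)" for k
  have "cmod (expval psi (tensor_id n m W)) \<le> (\<Sum>k<n. cmod (of_real (s k) * L ! k))"
    unfolding ev s_def by (rule norm_sum)
  also have "\<dots> = (\<Sum>k<n. s k)"
  proof (rule sum.cong[OF refl])
    fix k assume "k \<in> {..<n}"
    then have "cmod (L ! k) = 1" and "0 \<le> s k"
      using L unit d0 by (auto simp: s_def intro!: sum_nonneg)
    then show "cmod (of_real (s k) * L ! k) = s k" by (simp add: norm_mult)
  qed
  also have "\<dots> = 1" unfolding s_def using unitary_mixing_sum[OF V d1] .
  finally show ?thesis by (simp add: power_le_one)
qed

lemma expval_W_spec_attains_one: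
  assumes "0 < n" and size: "size Lam = n" and unit: "\<forall>a \<in># Lam. cmod a = 1"
    and psi: "unit_state n m psi" and rank: "schmidt_rank n m psi \<le> max_mult Lam"
  obtains W where "W \<in> W_spec n Lam" and "cmod (expval psi (tensor_id n m W)) = 1"
proof -
  obtain Q d z where Q: "unitary_mat n Q"
    and R: "partial_trace_B n m psi = Q * mat_diag n (\<lambda>k. of_real (d k)) * mat_adjoint Q"
    and d0: "\<And>k. k < n \<Longrightarrow> 0 \<le> d k" and d1: "(\<Sum>k<n. d k) = 1" and "z \<le> n"
    and support: "\<And>k. k < n \<Longrightarrow> 0 < d k \<longleftrightarrow> k < z" and z: "schmidt_rank n m psi = z"
    by (elim partial_trace_B_spectral[OF psi])
  obtain \<mu> where \<mu>: "\<mu> \<in># Lam" "count Lam \<mu> = max_mult Lam"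
    using max_mult_attained[of Lam] assms(1) size by force
  obtain L where L: "mset L = Lam" using ex_mset by blast
  \<comment> \<open>Put the most frequent eigenvalue on the support of the reduced state.\<close>
  define es where "es = replicate (max_mult Lam) \<mu> @ filter (\<lambda>x. x \<noteq> \<mu>) L"
  have es: "mset es = Lam" unfolding es_def using L \<mu>(2) by (intro multiset_eqI) auto
  then have "length es = n" using size by (metis size_mset)
  define W where "W = Q * mat_diag n (\<lambda>k. es ! k) * mat_adjoint Q"
  have W: "W \<in> W_spec n Lam"
    unfolding W_def using Q es \<open>length es = n\<close> unit by (rule unitary_conjugate_mat_diag_in_W_spec)
  have "expval psi (tensor_id n m W) = mat_trace (W * partial_trace_B n m psi)"
    using psi W by (intro expval_tensor_id) (auto simp: unit_state_def W_spec_def unitary_mat_def)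
  also have "\<dots> = (\<Sum>k<n. es ! k * of_real (d k))"
    unfolding W_def R by (rule mat_trace_unitary_conjugated_mat_diag_mult[OF Q])
  also have "\<dots> = (\<Sum>k<n. \<mu> * of_real (d k))"
  proof (rule sum.cong[OF refl])
    fix k assume "k \<in> {..<n}"
    then show "es ! k * of_real (d k) = \<mu> * of_real (d k)"
      using support[of k] d0[of k] rank z by (cases "k < z") (auto simp: es_def nth_append)
  qed
  also have "\<dots> = \<mu>" using d1 by (simp flip: sum_distrib_left of_real_sum)
  finally show thesis using that W \<mu>(1) unit by auto
qed

lemma expval_W_spec_gap:
  assumes size: "size Lam = n" and unit: "\<forall>a \<in># Lam. cmod a = 1"
    and psi: "unit_state n m psi" and rank: "max_mult Lam < schmidt_rank n m psi"
  obtains \<epsilon> where "0 < \<epsilon>"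
    and "\<And>W. W \<in> W_spec n Lam \<Longrightarrow> (cmod (expval psi (tensor_id n m W)))\<^sup>2 \<le> 1 - \<epsilon>"
proof -
  obtain Q d z where Q: "unitary_mat n Q"
    and R: "partial_trace_B n m psi = Q * mat_diag n (\<lambda>k. of_real (d k)) * mat_adjoint Q"
    and d0: "\<And>k. k < n \<Longrightarrow> 0 \<le> d k" and d1: "(\<Sum>k<n. d k) = 1" and "z \<le> n"
    and support: "\<And>k. k < n \<Longrightarrow> 0 < d k \<longleftrightarrow> k < z" and z: "schmidt_rank n m psi = z"
    by (elim partial_trace_B_spectral[OF psi])
  obtain \<gamma> where "0 < \<gamma>"
    and \<gamma>: "\<And>a b. a \<in># Lam \<Longrightarrow> b \<in># Lam \<Longrightarrow> a \<noteq> b \<Longrightarrow> Re (a * cnj b) \<le> 1 - \<gamma>"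
    using unit_circle_finite_gap[of "set_mset Lam"] unit by blast
  define \<delta> where "\<delta> = Min (d ` {..<z})"
  have "0 < \<delta>"
    unfolding \<delta>_def using rank z support \<open>z \<le> n\<close> by (subst Min_gr_iff) auto
  have \<delta>_le: "\<delta> \<le> d l" if "l < z" for l using that by (simp add: \<delta>_def)
  have "(cmod (expval psi (tensor_id n m W)))\<^sup>2 \<le> 1 - \<gamma> * \<delta>" if W: "W \<in> W_spec n Lam" for W
  proof -
    obtain L V where L: "mset L = Lam" "length L = n" and V: "unitary_mat n V"
      and ev: "expval psi (tensor_id n m W) = (\<Sum>k<n. of_real (\<Sum>l<n. d l * (cmod (V $$ (k, l)))\<^sup>2) * L ! k)"
      using expval_W_spec_mixture[OF psi W size Q R] .
    have L_in: "L ! k \<in># Lam" if "k < n" for k using L that by (metis nth_mem set_mset_mset)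
    show ?thesis unfolding ev
    proof (rule cmod_sum_convex_phases_sq_le[OF _ unitary_mixing_sum[OF V d1] _ less_imp_le[OF \<open>0 < \<gamma>\<close>]])
      fix k assume k: "k < n"
      define K where "K = {k'. k' < n \<and> L ! k' = L ! k}"
      have "card K \<le> max_mult Lam"
        using count_le_max_mult[of Lam "L ! k"] count_mset_eq_card_indices[of L "L ! k"] L
        by (simp add: K_def)
      then have "(\<Sum>k'\<in>K. \<Sum>l<n. d l * (cmod (V $$ (k', l)))\<^sup>2) \<le> 1 - \<delta>"
        using rank z \<open>z \<le> n\<close> d0 d1 \<open>0 < \<delta>\<close> \<delta>_le
        by (intro unitary_mixing_subset_le[OF V]) (auto simp: K_def)
      then show "(\<Sum>k'<n. if L ! k' = L ! k then \<Sum>l<n. d l * (cmod (V $$ (k', l)))\<^sup>2 else 0)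
          \<le> 1 - \<delta>"
        by (simp add: sum.If_cases K_def lessThan_def Collect_conj_eq Int_commute)
    qed (use d0 L_in unit \<gamma> in \<open>auto intro: sum_nonneg\<close>)
  qed
  then show thesis using that[of "\<gamma> * \<delta>"] \<open>0 < \<gamma>\<close> \<open>0 < \<delta>\<close> by simp
qed

lemma E_Lam_eq_0_iff_schmidt_rank_le:
  assumes "0 < n" and size: "size Lam = n" and unit: "\<forall>a \<in># Lam. cmod a = 1"
    and psi: "unit_state n m psi"
  shows "E_Lam n m Lam psi = 0 \<longleftrightarrow> schmidt_rank n m psi \<le> max_mult Lam"
proof -
  define S where "S = {(cmod (expval psi (tensor_id n m W)))\<^sup>2 | W. W \<in> W_spec n Lam}"
  have E: "E_Lam n m Lam psi = 1 - Sup S" by (simp add: E_Lam_def F_Lam_def S_def)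
  have le_1: "x \<le> 1" if "x \<in> S" for x
    using that expval_W_spec_sq_le_one[OF psi _ size unit] by (auto simp: S_def)
  obtain L where "mset L = Lam" using ex_mset by blast
  then have "1\<^sub>m n * mat_diag n (\<lambda>k. L ! k) * mat_adjoint (1\<^sub>m n) \<in> W_spec n Lam"
    using size unit by (intro unitary_conjugate_mat_diag_in_W_spec) (auto simp: unitary_mat_def)
  then have "S \<noteq> {}" by (auto simp: S_def)
  show ?thesis
  proof
    assume "E_Lam n m Lam psi = 0"
    show "schmidt_rank n m psi \<le> max_mult Lam"
    proof (rule ccontr)
      assume "\<not> schmidt_rank n m psi \<le> max_mult Lam"
      then have "max_mult Lam < schmidt_rank n m psi" by simp
      then obtain \<epsilon> where "0 < \<epsilon>"
        and "\<And>W. W \<in> W_spec n Lam \<Longrightarrow> (cmod (expval psi (tensor_id n m W)))\<^sup>2 \<le> 1 - \<epsilon>"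
        using expval_W_spec_gap[OF size unit psi] by blast
      then have "Sup S \<le> 1 - \<epsilon>" using \<open>S \<noteq> {}\<close> by (intro cSup_least) (auto simp: S_def)
      with \<open>0 < \<epsilon>\<close> \<open>E_Lam n m Lam psi = 0\<close> show False by (simp add: E)
    qed
  next
    assume "schmidt_rank n m psi \<le> max_mult Lam"
    then obtain W where "W \<in> W_spec n Lam" "cmod (expval psi (tensor_id n m W)) = 1"
      using expval_W_spec_attains_one[OF assms(1) size unit psi] by blast
    then have "1 \<in> S" by (force simp: S_def)
    then have "Sup S = 1" using le_1 by (intro cSup_eq_maximum) auto
    then show "E_Lam n m Lam psi = 0" by (simp add: E)
  qed
qed

lemma schmidt_rank_pos:
  assumes psi: "unit_state n m psi"
  shows "0 < schmidt_rank n m psi"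
proof (rule ccontr)
  assume "\<not> 0 < schmidt_rank n m psi"
  obtain Q d z where "unitary_mat n Q"
    and "partial_trace_B n m psi = Q * mat_diag n (\<lambda>k. of_real (d k)) * mat_adjoint Q"
    and d0: "\<And>k. k < n \<Longrightarrow> 0 \<le> d k" and d1: "(\<Sum>k<n. d k) = 1" and "z \<le> n"
    and support: "\<And>k. k < n \<Longrightarrow> 0 < d k \<longleftrightarrow> k < z" and z: "schmidt_rank n m psi = z"
    by (elim partial_trace_B_spectral[OF psi])
  have "d k = 0" if "k < n" for k
    using d0[OF that] support[OF that] z \<open>\<not> 0 < schmidt_rank n m psi\<close> by linarith
  then show False using d1 by simp
qed

text \<open>The maximally entangled state on the first r basis vectors of each factor.\<close>

lemma ex_unit_state_schmidt_rank:
  assumes "0 < r" and "r \<le> n" and "r \<le> m"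
  shows "\<exists>psi. unit_state n m psi \<and> schmidt_rank n m psi = r"
proof -
  define c where "c = complex_of_real (1 / sqrt r)"
  define psi where "psi = vec (n * m) (\<lambda>k. if k div m = k mod m \<and> k div m < r then c else 0)"
  define f where "f i = (if i < r then complex_of_real (1 / r) else 0)" for i
  have psi_carrier: "psi \<in> carrier_vec (n * m)" by (simp add: psi_def)
  have psi_index: "psi $ (i * m + j) = (if i = j \<and> i < r then c else 0)" if "i < n" "j < m" for i j
    using mult_add_less_mult[OF that] that by (simp add: psi_def)
  have "c * cnj c = of_real (1 / r)"
    using \<open>0 < r\<close> by (simp add: c_def power2_eq_square flip: of_real_mult)
  then have "(\<Sum>j<m. psi $ (i * m + j) * cnj (psi $ (i' * m + j))) = (if i = i' then f i else 0)"
    if "i < n" "i' < n" for i i'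
  proof -
    have "(\<Sum>j<m. psi $ (i * m + j) * cnj (psi $ (i' * m + j)))
        = (\<Sum>j<m. if j = i then (if i = i' \<and> i < r then c * cnj c else 0) else 0)"
      using that by (intro sum.cong refl) (auto simp: psi_index)
    then show ?thesis using \<open>c * cnj c = _\<close> assms(3) by (auto simp: f_def)
  qed
  then have R: "partial_trace_B n m psi = mat_diag n f"
    by (intro eq_matI) (auto simp: partial_trace_B_def mat_diag_def)
  have "psi \<bullet>c psi = mat_trace (mat_diag n f)"
    using mat_trace_partial_trace_B[OF psi_carrier] by (simp add: R)
  also have "\<dots> = (\<Sum>i<r. of_real (1 / r))"
    using assms(2) by (simp add: mat_trace_def mat_diag_def f_def sum.If_cases lessThan_def
        Collect_conj_eq Int_absorb1 flip: lessThan_def)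
  also have "\<dots> = 1" using \<open>0 < r\<close> by simp
  finally have "unit_state n m psi" using psi_carrier by (simp add: unit_state_def)
  moreover have "schmidt_rank n m psi = r"
    using rank_unitary_conjugate_mat_diag[of n "1\<^sub>m n" r f] assms
    by (simp add: schmidt_rank_def R unitary_mat_def f_def left_mult_one_mat[OF mat_diag_dim]
        right_mult_one_mat[OF mat_diag_dim])
  ultimately show ?thesis by blast
qed

lemma E_Lam_vanishes_exactly_on_product_states_iff:
  assumes "0 < n" and "n \<le> m" and size: "size Lam = n" and unit: "\<forall>a \<in># Lam. cmod a = 1"
  shows "(\<forall>psi. unit_state n m psi \<longrightarrow> (E_Lam n m Lam psi = 0 \<longleftrightarrow> schmidt_rank n m psi = 1))
    \<longleftrightarrow> max_mult Lam = 1"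
proof
  assume product: "\<forall>psi. unit_state n m psi \<longrightarrow> (E_Lam n m Lam psi = 0 \<longleftrightarrow> schmidt_rank n m psi = 1)"
  obtain \<mu> where "\<mu> \<in># Lam" "count Lam \<mu> = max_mult Lam"
    using max_mult_attained[of Lam] assms(1) size by force
  then have "0 < max_mult Lam" "max_mult Lam \<le> n"
    using count_le_size[of Lam \<mu>] size by (auto simp flip: count_greater_zero_iff)
  then obtain psi where psi: "unit_state n m psi" "schmidt_rank n m psi = max_mult Lam"
    using ex_unit_state_schmidt_rank[of "max_mult Lam" n m] assms(2) by auto
  then show "max_mult Lam = 1"
    using product E_Lam_eq_0_iff_schmidt_rank_le[OF assms(1) size unit psi(1)] by auto
next
  assume "max_mult Lam = 1"
  then show "\<forall>psi. unit_state n m psi \<longrightarrow> (E_Lam n m Lam psi = 0 \<longleftrightarrow> schmidt_rank n m psi = 1)"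
    using E_Lam_eq_0_iff_schmidt_rank_le[OF assms(1) size unit] schmidt_rank_pos
    by (metis One_nat_def Suc_leI le_antisym)
qed

theorem theorem3:
  fixes dA dB :: nat and Lam :: "complex multiset"
  assumes "0 < dA" and "dA \<le> dB"
    and "size Lam = dA" and "\<forall>a \<in># Lam. cmod a = 1"
  shows "(\<forall>psi. unit_state dA dB psi \<longrightarrow>
            (E_Lam dA dB Lam psi = 0 \<longleftrightarrow> schmidt_rank dA dB psi \<le> max_mult Lam))
       \<and> ((\<forall>psi. unit_state dA dB psi \<longrightarrow>
            (E_Lam dA dB Lam psi = 0 \<longleftrightarrow> schmidt_rank dA dB psi = 1))
          \<longleftrightarrow> card (set_mset Lam) = dA)"
proof -
  have "Lam \<noteq> {#}" using assms(1,3) by auto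
  then show ?thesis
    using E_Lam_eq_0_iff_schmidt_rank_le[OF assms(1,3,4)]
      E_Lam_vanishes_exactly_on_product_states_iff[OF assms]
      card_set_mset_eq_size_iff_max_mult assms(3) by auto
qed

end
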